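(* Let $c$ be a nonnegative integer, $a,b,n$ positive integers and $k$ a nonnegative integer with $k\le n$. Then: (1) $\Psi_n(n,a,b,c)=\Psi_n(0,a-1,b+1,c)$; (2) $\Psi_n(n-1,1,b,c)=\Psi_{n-1}(0,c,b+1,c)$; (3) $\Psi_n(0,1,b,0)=1$; (4) for $1\le k\le n$, $\;k\big(b+(k-1)\tfrac c2\big)\,\Psi_n(k,a,b,c)=(n-k+1)\big(a-1+(n-k)\tfrac c2\big)\,\Psi_n(k-1,a,b,c)$.
   Context: All constant terms are taken with $\operatorname{CT}_x=\operatorname{CT}_{x_n}\cdots\operatorname{CT}_{x_1}$ (iterated constant-term extraction), where $(1-x_i)^{-b}$ and $x_i/(1-x_i)$ are expanded as power series in $x_i$, and for $i<j$, $(x_j-x_i)^{-c}=x_j^{-c}(1-x_i/x_j)^{-c}$ is expanded as a power series in $x_i/x_j$. $$\Psi_n(k,a,b,c):=\operatorname{CT}_x[t^k]\prod_{i=1}^n(1-x_i)^{-b}x_i^{-a+1}\Big(1+t\frac{x_i}{1-x_i}\Big)\prod_{1\le i<j\le n}(x_j-x_i)^{-c},$$ with $[t^k]$ the coefficient of $t^k$; for $n=0$ the empty product is $1$. *)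

theory Defs
  imports Complex_Main
begin

text \<open>Variables are indexed 0..n-1 (x_1..x_n of the paper).  S is the set of indices
  picking the factor t*x_i/(1-x_i) (coefficient of t^k).  m i is the exponent taken from
  the series of (1-x_i)^(-(b+[i in S])), with coefficient pochhammer(b',m)/m!;
  p i j (i<j) is the exponent of (x_i/x_j) in (x_j-x_i)^(-c) = x_j^(-c) (1-x_i/x_j)^(-c),
  with coefficient pochhammer(c,p)/p!.\<close>

definition psi_exp :: "nat \<Rightarrow> nat \<Rightarrow> nat \<Rightarrow> nat set \<Rightarrow> (nat \<Rightarrow> nat) \<Rightarrow> (nat \<Rightarrow> nat \<Rightarrow> nat) \<Rightarrow> nat \<Rightarrow> int" where
  "psi_exp n a c S m p i =
     1 - int a + (if i \<in> S then 1 else 0) + int (m i)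
     + (\<Sum>j\<in>{i<..<n}. int (p i j)) - (\<Sum>j<i. int c + int (p j i))"

definition psi_tuples :: "nat \<Rightarrow> nat \<Rightarrow> nat \<Rightarrow> nat set \<Rightarrow> ((nat \<Rightarrow> nat) \<times> (nat \<Rightarrow> nat \<Rightarrow> nat)) set" where
  "psi_tuples n a c S = {(m, p).
      (\<forall>i. n \<le> i \<longrightarrow> m i = 0) \<and>
      (\<forall>i j. \<not> (i < j \<and> j < n) \<longrightarrow> p i j = 0) \<and>
      (\<forall>i<n. psi_exp n a c S m p i = 0)}"

definition Psi :: "nat \<Rightarrow> nat \<Rightarrow> nat \<Rightarrow> nat \<Rightarrow> nat \<Rightarrow> real" where
  "Psi n k a b c =
     (\<Sum>S\<in>{S. S \<subseteq> {..<n} \<and> card S = k}.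
        \<Sum>(m, p)\<in>psi_tuples n a c S.
          (\<Prod>i<n. pochhammer (real (b + (if i \<in> S then 1 else 0))) (m i) / fact (m i))
          * (\<Prod>(i, j)\<in>{(i, j). i < j \<and> j < n}. pochhammer (real c) (p i j) / fact (p i j)))"

end

theory Submission
  imports Defs
begin

text \<open>
  Write \<open>F\<^sub>S\<close> for the integrand of \<open>\<Psi>\<^sub>n\<close> in which the factor \<open>t x\<^sub>i/(1 - x\<^sub>i)\<close>
  is chosen exactly for \<open>i \<in> S\<close>, so that \<open>\<Psi>\<^sub>n(k, a, b, c)\<close> is the sum of \<open>CT F\<^sub>S\<close> over
  all \<open>k\<close>-subsets \<open>S\<close>. Identity (1) holds because both sides have the same integrand, and
  (3) because for \<open>a = 1\<close>, \<open>c = 0\<close> the integrand is a power series with constant term \<open>1\<close>.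
  For (2), the variable \<open>x\<^sub>1\<close> occurs in the expansion with exponent at least \<open>[1 \<in> S]\<close>, so only
  \<open>S = {2, ..., n}\<close> contributes, and there \<open>x\<^sub>1\<close> may be set to \<open>0\<close>, which turns every
  \<open>(x\<^sub>j - x\<^sub>1)\<^bsup>-c\<^esup>\<close> into \<open>x\<^sub>j\<^bsup>-c\<^esup>\<close>.

  Identity (4) comes from \<open>CT(x\<^sub>i \<partial>F\<^sub>T/\<partial>x\<^sub>i) = 0\<close> for \<open>|T| = k - 1\<close> and \<open>i \<notin> T\<close>.
  The factors \<open>x\<^sub>i\<^bsup>1-a\<^esup>\<close> and \<open>(1 - x\<^sub>i)\<^bsup>-b\<^esup>\<close> contribute \<open>(1 - a) F\<^sub>T\<close> and \<open>b F\<^bsub>T+i\<^esub>\<close>,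
  which sum to \<open>(1 - a)(n - k + 1) \<Psi>\<^sub>n(k - 1) + b k \<Psi>\<^sub>n(k)\<close> over all \<open>i\<close> and \<open>T\<close>.
  The factor \<open>(x\<^sub>j - x\<^sub>i)\<^bsup>-c\<^esup>\<close> contributes \<open>c x\<^sub>i/(x\<^sub>j - x\<^sub>i) F\<^sub>T\<close> when \<open>i \<notin> T\<close> is
  differentiated and \<open>-c x\<^sub>j/(x\<^sub>j - x\<^sub>i) F\<^sub>T\<close> when \<open>j \<notin> T\<close> is. For \<open>T\<close> avoiding both
  these add up to \<open>-c F\<^sub>T\<close>, and the sets containing exactly one of \<open>i, j\<close> pair up via
  \<open>x\<^sub>i F\<^bsub>U+j\<^esub> - x\<^sub>j F\<^bsub>U+i\<^esub> = (x\<^sub>j - x\<^sub>i) F\<^bsub>U+i+j\<^esub>\<close>. Altogether the pairs give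
  \<open>c (C(k, 2) \<Psi>\<^sub>n(k) - C(n - k + 1, 2) \<Psi>\<^sub>n(k - 1))\<close>.
\<close>

abbreviation fun_upd2 :: "('a \<Rightarrow> 'b \<Rightarrow> 'c) \<Rightarrow> 'a \<Rightarrow> 'b \<Rightarrow> 'c \<Rightarrow> 'a \<Rightarrow> 'b \<Rightarrow> 'c" where
  "fun_upd2 f i j v \<equiv> f(i := (f i)(j := v))"

definition index_pairs :: "nat \<Rightarrow> (nat \<times> nat) set" where
  "index_pairs n = {(i, j). i < j \<and> j < n}"

lemma finite_index_pairs [simp]: "finite (index_pairs n)"
proof -
  have "index_pairs n \<subseteq> {..<n} \<times> {..<n}"
    unfolding index_pairs_def by auto
  then show ?thesis
    by (rule finite_subset) auto
qed

lemma sum_index_pairs_lower: "(\<Sum>i<n. \<Sum>j\<in>{i<..<n}. f i j) = (\<Sum>(i, j)\<in>index_pairs n. f i j)"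
proof -
  have "index_pairs n = Sigma {..<n} (\<lambda>i. {i<..<n})"
    unfolding index_pairs_def by auto
  then show ?thesis
    by (simp add: sum.Sigma)
qed

lemma sum_index_pairs_upper: "(\<Sum>j<n. \<Sum>i<j. f i j) = (\<Sum>(i, j)\<in>index_pairs n. f i j)"
proof -
  have "(\<Sum>j<n. \<Sum>i<j. f i j) = (\<Sum>(j, i)\<in>Sigma {..<n} (\<lambda>j. {..<j}). f i j)"
    by (simp add: sum.Sigma)
  also have "\<dots> = (\<Sum>(i, j)\<in>index_pairs n. f i j)"
    by (rule sum.reindex_bij_witness[where i = prod.swap and j = prod.swap])
      (auto simp: index_pairs_def)
  finally show ?thesis .
qed

lemma card_index_pairs_within:
  assumes "R \<subseteq> {..<n}"
  shows "card {x \<in> index_pairs n. fst x \<in> R \<and> snd x \<in> R} = card R choose 2"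
proof -
  let ?P = "{x \<in> index_pairs n. fst x \<in> R \<and> snd x \<in> R}"
  have "finite R"
    using assms finite_subset by blast
  have inj: "inj_on (\<lambda>(i, j). {i, j}) ?P"
    by (auto simp: inj_on_def doubleton_eq_iff index_pairs_def)
  have "(\<lambda>(i, j). {i, j}) ` ?P = {B. B \<subseteq> R \<and> card B = 2}"
  proof
    show "{B. B \<subseteq> R \<and> card B = 2} \<subseteq> (\<lambda>(i, j). {i, j}) ` ?P"
    proof
      fix B assume "B \<in> {B. B \<subseteq> R \<and> card B = 2}"
      then obtain x y where B: "B = {x, y}" "x \<noteq> y" "x \<in> R" "y \<in> R"
        by (auto simp: card_2_iff)
      show "B \<in> (\<lambda>(i, j). {i, j}) ` ?P"
      proof (cases "x < y")
        case True
        then show ?thesis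
          using B assms by (intro image_eqI[where x = "(x, y)"]) (auto simp: index_pairs_def)
      next
        case False
        then show ?thesis
          using B assms by (intro image_eqI[where x = "(y, x)"]) (auto simp: index_pairs_def)
      qed
    qed
  qed (auto simp: index_pairs_def)
  then have "card ((\<lambda>(i, j). {i, j}) ` ?P) = card R choose 2"
    using n_subsets[OF \<open>finite R\<close>] by simp
  then show ?thesis
    using inj by (simp add: card_image)
qed

lemma two_mult_choose_two: "2 * real (r choose 2) = real r * (real r - 1)"
proof (induction r)
  case (Suc r)
  have "Suc r choose 2 = r + (r choose 2)"
    using binomial_Suc_Suc[of r 1] by (simp add: numeral_2_eq_2)
  then show ?case
    using Suc by (simp add: algebra_simps)
qed simp

section \<open>Generalised constant terms\<close>

definition ser_coeff :: "nat \<Rightarrow> nat \<Rightarrow> real" where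
  "ser_coeff r q = pochhammer (real r) q / fact q"

lemma ser_coeff_0 [simp]: "ser_coeff r 0 = 1"
  by (simp add: ser_coeff_def)

lemma ser_coeff_Suc_Suc: "ser_coeff (Suc r) (Suc q) = ser_coeff r (Suc q) + ser_coeff (Suc r) q"
proof -
  have "pochhammer (real r) (Suc q) = real r * pochhammer (real r + 1) q"
    by (simp add: pochhammer_rec)
  moreover have "pochhammer (real r + 1) (Suc q) = pochhammer (real r + 1) q * (real r + 1 + real q)"
    by (simp add: pochhammer_Suc)
  moreover have "(fact (Suc q) :: real) = (real q + 1) * fact q"
    by simp
  moreover have "(real q + 1) * fact q \<noteq> (0 :: real)"
    by (simp add: add_pos_pos)
  ultimately show ?thesis
    unfolding ser_coeff_def of_nat_Suc add.commute[of 1]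
    by (simp add: divide_simps) (simp add: algebra_simps)
qed

lemma ser_coeff_eq_diff:
  "ser_coeff r q = ser_coeff (Suc r) q - (if q = 0 then 0 else ser_coeff (Suc r) (q - 1))"
  using ser_coeff_Suc_Suc[of r "q - 1"] by (cases q) auto

lemma Suc_mult_ser_coeff_Suc: "real (Suc q) * ser_coeff r (Suc q) = real r * ser_coeff (Suc r) q"
proof -
  have "(real q + 1) * fact q \<noteq> (0 :: real)"
    by (simp add: add_pos_pos)
  then show ?thesis
    unfolding ser_coeff_def by (simp add: pochhammer_rec divide_simps) (simp add: algebra_simps)
qed

lemma add_mult_ser_coeff: "(real r + real q) * ser_coeff r q = real r * ser_coeff (Suc r) q"
proof -
  have "pochhammer (real r) (Suc q) = pochhammer (real r) q * (real r + real q)"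
    by (simp add: pochhammer_Suc)
  moreover have "pochhammer (real r) (Suc q) = real r * pochhammer (real r + 1) q"
    by (simp add: pochhammer_rec)
  ultimately show ?thesis
    unfolding ser_coeff_def of_nat_Suc add.commute[of 1] by (simp add: field_simps)
qed

text \<open>\<open>ct n \<alpha> \<beta> \<gamma>\<close> is the constant term of
  \<open>\<Prod>\<^sub>i x\<^sub>i\<^bsup>\<alpha> i\<^esup> (1 - x\<^sub>i)\<^bsup>-\<beta> i\<^esup> \<Prod>\<^sub>i\<^sub><\<^sub>j (x\<^sub>j - x\<^sub>i)\<^bsup>-\<gamma> i j\<^esup>\<close>, expanded as in \<^const>\<open>Psi\<close>:
  \<open>(m, p)\<close> picks the term \<open>x\<^sub>i\<^bsup>m i\<^esup>\<close> of the \<open>i\<close>-th series and \<open>(x\<^sub>i/x\<^sub>j)\<^bsup>p i j\<^esup>\<close> of the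
  \<open>(i, j)\<close>-th, \<open>ct_exp\<close> is the resulting exponent of \<open>x\<^sub>i\<close>, and \<^term>\<open>ser_coeff r q\<close>
  is the coefficient of \<open>x\<^sup>q\<close> in \<open>(1 - x)\<^bsup>-r\<^esup>\<close>.\<close>

definition ct_exp ::
    "nat \<Rightarrow> (nat \<Rightarrow> int) \<Rightarrow> (nat \<Rightarrow> nat \<Rightarrow> nat) \<Rightarrow> (nat \<Rightarrow> nat) \<Rightarrow> (nat \<Rightarrow> nat \<Rightarrow> nat) \<Rightarrow> nat \<Rightarrow> int" where
  "ct_exp n \<alpha> \<gamma> m p i =
     \<alpha> i + int (m i) + (\<Sum>j\<in>{i<..<n}. int (p i j)) - (\<Sum>j<i. int (\<gamma> j i) + int (p j i))"

definition ct_tuples ::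
    "nat \<Rightarrow> (nat \<Rightarrow> int) \<Rightarrow> (nat \<Rightarrow> nat \<Rightarrow> nat) \<Rightarrow> ((nat \<Rightarrow> nat) \<times> (nat \<Rightarrow> nat \<Rightarrow> nat)) set" where
  "ct_tuples n \<alpha> \<gamma> = {(m, p).
      (\<forall>i. n \<le> i \<longrightarrow> m i = 0) \<and> (\<forall>i j. \<not> (i < j \<and> j < n) \<longrightarrow> p i j = 0) \<and>
      (\<forall>i<n. ct_exp n \<alpha> \<gamma> m p i = 0)}"

definition ct_weight ::
    "nat \<Rightarrow> (nat \<Rightarrow> nat) \<Rightarrow> (nat \<Rightarrow> nat \<Rightarrow> nat) \<Rightarrow> (nat \<Rightarrow> nat) \<Rightarrow> (nat \<Rightarrow> nat \<Rightarrow> nat) \<Rightarrow> real" where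
  "ct_weight n \<beta> \<gamma> m p =
     (\<Prod>i<n. ser_coeff (\<beta> i) (m i)) * (\<Prod>(i, j)\<in>index_pairs n. ser_coeff (\<gamma> i j) (p i j))"

definition ct :: "nat \<Rightarrow> (nat \<Rightarrow> int) \<Rightarrow> (nat \<Rightarrow> nat) \<Rightarrow> (nat \<Rightarrow> nat \<Rightarrow> nat) \<Rightarrow> real" where
  "ct n \<alpha> \<beta> \<gamma> = (\<Sum>(m, p)\<in>ct_tuples n \<alpha> \<gamma>. ct_weight n \<beta> \<gamma> m p)"

lemma ct_cong:
  assumes "\<And>i. i < n \<Longrightarrow> \<alpha> i = \<alpha>' i" and "\<And>i. i < n \<Longrightarrow> \<beta> i = \<beta>' i"
  shows "ct n \<alpha> \<beta> \<gamma> = ct n \<alpha>' \<beta>' \<gamma>"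
proof -
  have "ct_tuples n \<alpha> \<gamma> = ct_tuples n \<alpha>' \<gamma>"
    using assms(1) unfolding ct_tuples_def ct_exp_def by auto
  moreover have "ct_weight n \<beta> \<gamma> m p = ct_weight n \<beta>' \<gamma> m p" for m p
  proof -
    have "(\<Prod>i<n. ser_coeff (\<beta> i) (m i)) = (\<Prod>i<n. ser_coeff (\<beta>' i) (m i))"
      by (rule prod.cong) (auto simp: assms(2))
    then show ?thesis
      unfolding ct_weight_def by simp
  qed
  ultimately show ?thesis
    unfolding ct_def by (simp add: case_prod_unfold)
qed

text \<open>Weighting the exponent of \<open>x\<^sub>i\<close> by \<open>n - i\<close>, each factor \<open>x\<^sub>i/x\<^sub>j\<close> gets the positive
  weight \<open>j - i\<close>; hence all tuples have the same weighted size, which bounds them.\<close>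

definition ct_weighted_degree :: "nat \<Rightarrow> (nat \<Rightarrow> int) \<Rightarrow> (nat \<Rightarrow> nat \<Rightarrow> nat) \<Rightarrow> int" where
  "ct_weighted_degree n \<alpha> \<gamma> =
     (\<Sum>(i, j)\<in>index_pairs n. int (n - j) * int (\<gamma> i j)) - (\<Sum>i<n. int (n - i) * \<alpha> i)"

lemma ct_tuples_weighted_sum:
  assumes "(m, p) \<in> ct_tuples n \<alpha> \<gamma>"
  shows "(\<Sum>i<n. int (n - i) * int (m i)) + (\<Sum>(i, j)\<in>index_pairs n. int (j - i) * int (p i j))
       = ct_weighted_degree n \<alpha> \<gamma>"
proof -
  let ?w = "\<lambda>i. int (n - i)"
  have "0 = (\<Sum>i<n. ?w i * ct_exp n \<alpha> \<gamma> m p i)"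
    using assms unfolding ct_tuples_def by (auto intro!: sum.neutral)
  also have "\<dots> = (\<Sum>i<n. ?w i * \<alpha> i) + (\<Sum>i<n. ?w i * int (m i))
      + (\<Sum>i<n. \<Sum>j\<in>{i<..<n}. ?w i * int (p i j))
      - (\<Sum>i<n. \<Sum>j<i. ?w i * (int (\<gamma> j i) + int (p j i)))"
    unfolding ct_exp_def by (simp add: algebra_simps sum.distrib sum_subtractf sum_distrib_left)
  also have "(\<Sum>i<n. \<Sum>j\<in>{i<..<n}. ?w i * int (p i j)) = (\<Sum>(i, j)\<in>index_pairs n. ?w i * int (p i j))"
    by (rule sum_index_pairs_lower)
  also have "(\<Sum>i<n. \<Sum>j<i. ?w i * (int (\<gamma> j i) + int (p j i)))
      = (\<Sum>(i, j)\<in>index_pairs n. ?w j * (int (\<gamma> i j) + int (p i j)))"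
    by (rule sum_index_pairs_upper)
  finally have "0 = (\<Sum>i<n. ?w i * \<alpha> i) + (\<Sum>i<n. ?w i * int (m i))
      + (\<Sum>(i, j)\<in>index_pairs n. ?w i * int (p i j))
      - (\<Sum>(i, j)\<in>index_pairs n. ?w j * (int (\<gamma> i j) + int (p i j)))" .
  moreover have "(\<Sum>(i, j)\<in>index_pairs n. ?w i * int (p i j))
      - (\<Sum>(i, j)\<in>index_pairs n. ?w j * (int (\<gamma> i j) + int (p i j)))
      = (\<Sum>(i, j)\<in>index_pairs n. int (j - i) * int (p i j))
      - (\<Sum>(i, j)\<in>index_pairs n. int (n - j) * int (\<gamma> i j))"
    by (simp only: sum_subtractf[symmetric])
      (rule sum.cong, auto simp: index_pairs_def algebra_simps of_nat_diff)
  ultimately show ?thesis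
    unfolding ct_weighted_degree_def by linarith
qed

lemma ct_tuples_bounded:
  assumes "(m, p) \<in> ct_tuples n \<alpha> \<gamma>"
  shows "int (m i) \<le> ct_weighted_degree n \<alpha> \<gamma>" and "int (p i j) \<le> ct_weighted_degree n \<alpha> \<gamma>"
proof -
  note sum_eq = ct_tuples_weighted_sum[OF assms]
  have m_nonneg: "0 \<le> (\<Sum>i<n. int (n - i) * int (m i))"
    by (intro sum_nonneg) auto
  have p_nonneg: "0 \<le> (\<Sum>(i, j)\<in>index_pairs n. int (j - i) * int (p i j))"
    by (intro sum_nonneg) auto
  have "int (m i) \<le> (\<Sum>i<n. int (n - i) * int (m i))"
  proof (cases "i < n")
    case True
    then have "int (m i) \<le> int (n - i) * int (m i)"
      by (simp add: mult_le_cancel_right1)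
    also have "\<dots> \<le> (\<Sum>i<n. int (n - i) * int (m i))"
      using True by (intro member_le_sum) auto
    finally show ?thesis .
  next
    case False
    then show ?thesis
      using assms m_nonneg unfolding ct_tuples_def by auto
  qed
  then show "int (m i) \<le> ct_weighted_degree n \<alpha> \<gamma>"
    using sum_eq p_nonneg by linarith
  have "int (p i j) \<le> (\<Sum>(i, j)\<in>index_pairs n. int (j - i) * int (p i j))"
  proof (cases "i < j \<and> j < n")
    case True
    then have "int (p i j) \<le> int (j - i) * int (p i j)"
      by (simp add: mult_le_cancel_right1)
    also have "\<dots> = (case (i, j) of (i, j) \<Rightarrow> int (j - i) * int (p i j))"
      by simp
    also have "\<dots> \<le> (\<Sum>(i, j)\<in>index_pairs n. int (j - i) * int (p i j))"
      using True by (intro member_le_sum finite_index_pairs) (auto simp: index_pairs_def)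
    finally show ?thesis .
  next
    case False
    then show ?thesis
      using assms p_nonneg unfolding ct_tuples_def by auto
  qed
  then show "int (p i j) \<le> ct_weighted_degree n \<alpha> \<gamma>"
    using sum_eq m_nonneg by linarith
qed

lemma finite_ct_tuples [simp]: "finite (ct_tuples n \<alpha> \<gamma>)"
proof -
  define B where "B = nat (ct_weighted_degree n \<alpha> \<gamma>)"
  define M where "M = {f :: nat \<Rightarrow> nat. \<forall>x. (x \<in> {..<n} \<longrightarrow> f x \<in> {..B}) \<and> (x \<notin> {..<n} \<longrightarrow> f x = 0)}"
  define P where "P = {g :: nat \<Rightarrow> nat \<Rightarrow> nat. \<forall>x. (x \<in> {..<n} \<longrightarrow> g x \<in> M) \<and> (x \<notin> {..<n} \<longrightarrow> g x = (\<lambda>_. 0))}"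
  have "finite M"
    unfolding M_def by (rule finite_set_of_finite_funs) auto
  then have "finite P"
    unfolding P_def by (intro finite_set_of_finite_funs) auto
  have "ct_tuples n \<alpha> \<gamma> \<subseteq> M \<times> P"
  proof
    fix t assume "t \<in> ct_tuples n \<alpha> \<gamma>"
    then obtain m p where t: "t = (m, p)" and mp: "(m, p) \<in> ct_tuples n \<alpha> \<gamma>"
      by (cases t) auto
    have "m i \<le> B" "p i j \<le> B" for i j
      using ct_tuples_bounded[OF mp] unfolding B_def by (metis nat_int nat_mono)+
    then have "m \<in> M" "p \<in> P"
      using mp unfolding ct_tuples_def M_def P_def by (auto simp: fun_eq_iff)
    then show "t \<in> M \<times> P"
      using t by simp
  qed
  then show ?thesis
    using \<open>finite M\<close> \<open>finite P\<close> by (rule finite_subset[OF _ finite_cartesian_product])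
qed

lemma sum_int_fun_upd:
  assumes "finite A" and "x \<in> A"
  shows "(\<Sum>l\<in>A. int ((g(x := v)) l)) = (\<Sum>l\<in>A. int (g l)) + int v - int (g x)"
proof -
  have "(\<Sum>l\<in>A - {x}. int ((g(x := v)) l)) = (\<Sum>l\<in>A - {x}. int (g l))"
    by (rule sum.cong) auto
  then show ?thesis
    using assms by (simp add: sum.remove)
qed

lemma ct_exp_upd_m:
  "ct_exp n \<alpha> \<gamma> (m(i := v)) p l = ct_exp n \<alpha> \<gamma> m p l + (if l = i then int v - int (m i) else 0)"
  unfolding ct_exp_def by auto

lemma ct_exp_upd_alpha:
  "ct_exp n (\<alpha>(i := x)) \<gamma> m p l = ct_exp n \<alpha> \<gamma> m p l + (if l = i then x - \<alpha> i else 0)"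
  unfolding ct_exp_def by auto

lemma ct_exp_upd_p:
  assumes "i < j" and "j < n"
  shows "ct_exp n \<alpha> \<gamma> m (fun_upd2 p i j v) l = ct_exp n \<alpha> \<gamma> m p l
     + (if l = i then int v - int (p i j) else if l = j then int (p i j) - int v else 0)"
proof -
  consider "l = i" | "l = j" | "l \<noteq> i \<and> l \<noteq> j"
    by blast
  then show ?thesis
  proof cases
    case 1
    have "(\<Sum>l'\<in>{i<..<n}. int ((fun_upd2 p i j v) i l')) = (\<Sum>l'\<in>{i<..<n}. int (p i l')) + int v - int (p i j)"
      using sum_int_fun_upd[of "{i<..<n}" j "p i" v] assms by simp
    moreover have "(\<Sum>l'<i. int (\<gamma> l' i) + int ((fun_upd2 p i j v) l' i)) = (\<Sum>l'<i. int (\<gamma> l' i) + int (p l' i))"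
      by (rule sum.cong) auto
    ultimately show ?thesis
      using 1 unfolding ct_exp_def by simp
  next
    case 2
    have "(\<Sum>l'\<in>{j<..<n}. int ((fun_upd2 p i j v) j l')) = (\<Sum>l'\<in>{j<..<n}. int (p j l'))"
      using assms by (intro sum.cong) auto
    moreover have "(\<Sum>l'<j. int ((fun_upd2 p i j v) l' j)) = (\<Sum>l'<j. int (((\<lambda>l'. p l' j)(i := v)) l'))"
      by (rule sum.cong) auto
    moreover have "\<dots> = (\<Sum>l'<j. int (p l' j)) + int v - int (p i j)"
      using sum_int_fun_upd[of "{..<j}" i "\<lambda>l'. p l' j" v] assms by simp
    ultimately show ?thesis
      using 2 assms unfolding ct_exp_def by (simp add: sum.distrib)
  next
    case 3
    have "(\<Sum>l'\<in>{l<..<n}. int ((fun_upd2 p i j v) l l')) = (\<Sum>l'\<in>{l<..<n}. int (p l l'))"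
      using 3 by (intro sum.cong) auto
    moreover have "(\<Sum>l'<l. int (\<gamma> l' l) + int ((fun_upd2 p i j v) l' l))
        = (\<Sum>l'<l. int (\<gamma> l' l) + int (p l' l))"
      using 3 by (intro sum.cong) auto
    ultimately show ?thesis
      using 3 unfolding ct_exp_def by simp
  qed
qed

lemma ct_exp_upd_gamma:
  assumes "i < j" and "j < n"
  shows "ct_exp n \<alpha> (fun_upd2 \<gamma> i j (Suc (\<gamma> i j))) m p l = ct_exp n \<alpha> \<gamma> m p l - (if l = j then 1 else 0)"
proof (cases "l = j")
  case True
  have "(\<Sum>l'<j. int ((fun_upd2 \<gamma> i j (Suc (\<gamma> i j))) l' j))
      = (\<Sum>l'<j. int (((\<lambda>l'. \<gamma> l' j)(i := Suc (\<gamma> i j))) l'))"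
    by (rule sum.cong) auto
  also have "\<dots> = (\<Sum>l'<j. int (\<gamma> l' j)) + 1"
    using sum_int_fun_upd[of "{..<j}" i "\<lambda>l'. \<gamma> l' j" "Suc (\<gamma> i j)"] assms by simp
  finally have "(\<Sum>l'<j. int ((fun_upd2 \<gamma> i j (Suc (\<gamma> i j))) l' j)) = (\<Sum>l'<j. int (\<gamma> l' j)) + 1" .
  then show ?thesis
    using True unfolding ct_exp_def by (simp add: sum.distrib)
next
  case False
  have "(\<Sum>l'<l. int ((fun_upd2 \<gamma> i j (Suc (\<gamma> i j))) l' l) + int (p l' l))
      = (\<Sum>l'<l. int (\<gamma> l' l) + int (p l' l))"
    using False by (intro sum.cong) auto
  then show ?thesis
    using False unfolding ct_exp_def by simp
qed

lemma sum_ct_tuples_raise_alpha: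
  assumes "i < n"
  shows "(\<Sum>(m, p)\<in>ct_tuples n (\<alpha>(i := \<alpha> i + 1)) \<gamma>. h m p)
       = (\<Sum>(m, p)\<in>ct_tuples n \<alpha> \<gamma>. if m i = 0 then 0 else h (m(i := m i - 1)) p)"
proof -
  have "(\<Sum>(m, p)\<in>ct_tuples n \<alpha> \<gamma>. if m i = 0 then 0 else h (m(i := m i - 1)) p)
      = (\<Sum>t\<in>{t\<in>ct_tuples n \<alpha> \<gamma>. fst t i \<noteq> 0}. h ((fst t)(i := fst t i - 1)) (snd t))"
    by (subst sum.inter_filter) (auto intro!: sum.cong)
  also have "\<dots> = (\<Sum>(m, p)\<in>ct_tuples n (\<alpha>(i := \<alpha> i + 1)) \<gamma>. h m p)"
  proof (rule sum.reindex_bij_witness[where i = "\<lambda>(m, p). (m(i := m i + 1), p)"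
        and j = "\<lambda>(m, p). (m(i := m i - 1), p)"])
    fix t assume t: "t \<in> {t\<in>ct_tuples n \<alpha> \<gamma>. fst t i \<noteq> 0}"
    obtain m p where tp: "t = (m, p)"
      by (cases t)
    show "(case (case t of (m, p) \<Rightarrow> (m(i := m i - 1), p)) of (m, p) \<Rightarrow> (m(i := m i + 1), p)) = t"
      using t tp by auto
    show "(case t of (m, p) \<Rightarrow> (m(i := m i - 1), p)) \<in> ct_tuples n (\<alpha>(i := \<alpha> i + 1)) \<gamma>"
      using t tp assms by (auto simp: ct_tuples_def ct_exp_upd_m ct_exp_upd_alpha)
    show "(case (case t of (m, p) \<Rightarrow> (m(i := m i - 1), p)) of (m, p) \<Rightarrow> h m p)
        = h ((fst t)(i := fst t i - 1)) (snd t)"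
      using tp by simp
  next
    fix t assume t: "t \<in> ct_tuples n (\<alpha>(i := \<alpha> i + 1)) \<gamma>"
    obtain m p where tp: "t = (m, p)"
      by (cases t)
    show "(case (case t of (m, p) \<Rightarrow> (m(i := m i + 1), p)) of (m, p) \<Rightarrow> (m(i := m i - 1), p)) = t"
      using t tp by auto
    show "(case t of (m, p) \<Rightarrow> (m(i := m i + 1), p)) \<in> {t\<in>ct_tuples n \<alpha> \<gamma>. fst t i \<noteq> 0}"
      using t tp assms by (auto simp: ct_tuples_def ct_exp_upd_m ct_exp_upd_alpha)
  qed
  finally show ?thesis
    by simp
qed

lemma sum_ct_tuples_raise_alpha_gamma:
  assumes "i < j" and "j < n"
  shows "(\<Sum>(m, p)\<in>ct_tuples n (\<alpha>(i := \<alpha> i + 1)) (fun_upd2 \<gamma> i j (Suc (\<gamma> i j))). h m p)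
       = (\<Sum>(m, p)\<in>ct_tuples n \<alpha> \<gamma>. if p i j = 0 then 0 else h m (fun_upd2 p i j (p i j - 1)))"
proof -
  let ?\<gamma> = "fun_upd2 \<gamma> i j (Suc (\<gamma> i j))"
  have "(\<Sum>(m, p)\<in>ct_tuples n \<alpha> \<gamma>. if p i j = 0 then 0 else h m (fun_upd2 p i j (p i j - 1)))
      = (\<Sum>t\<in>{t\<in>ct_tuples n \<alpha> \<gamma>. snd t i j \<noteq> 0}. h (fst t) (fun_upd2 (snd t) i j (snd t i j - 1)))"
    by (subst sum.inter_filter) (auto intro!: sum.cong)
  also have "\<dots> = (\<Sum>(m, p)\<in>ct_tuples n (\<alpha>(i := \<alpha> i + 1)) ?\<gamma>. h m p)"
  proof (rule sum.reindex_bij_witness[where i = "\<lambda>(m, p). (m, fun_upd2 p i j (p i j + 1))"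
        and j = "\<lambda>(m, p). (m, fun_upd2 p i j (p i j - 1))"])
    fix t assume t: "t \<in> {t\<in>ct_tuples n \<alpha> \<gamma>. snd t i j \<noteq> 0}"
    obtain m p where tp: "t = (m, p)"
      by (cases t)
    show "(case (case t of (m, p) \<Rightarrow> (m, fun_upd2 p i j (p i j - 1))) of
        (m, p) \<Rightarrow> (m, fun_upd2 p i j (p i j + 1))) = t"
      using t tp by (auto simp: fun_eq_iff)
    have "\<forall>l<n. ct_exp n (\<alpha>(i := \<alpha> i + 1)) ?\<gamma> m (fun_upd2 p i j (p i j - 1)) l = 0"
      using t tp assms by (auto simp: ct_tuples_def ct_exp_upd_p ct_exp_upd_alpha ct_exp_upd_gamma)
    then show "(case t of (m, p) \<Rightarrow> (m, fun_upd2 p i j (p i j - 1))) \<in> ct_tuples n (\<alpha>(i := \<alpha> i + 1)) ?\<gamma>"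
      using t tp assms by (auto simp: ct_tuples_def)
    show "(case (case t of (m, p) \<Rightarrow> (m, fun_upd2 p i j (p i j - 1))) of (m, p) \<Rightarrow> h m p)
        = h (fst t) (fun_upd2 (snd t) i j (snd t i j - 1))"
      using tp by simp
  next
    fix t assume t: "t \<in> ct_tuples n (\<alpha>(i := \<alpha> i + 1)) ?\<gamma>"
    obtain m p where tp: "t = (m, p)"
      by (cases t)
    show "(case (case t of (m, p) \<Rightarrow> (m, fun_upd2 p i j (p i j + 1))) of
        (m, p) \<Rightarrow> (m, fun_upd2 p i j (p i j - 1))) = t"
      using t tp by (auto simp: fun_eq_iff)
    have "\<forall>l<n. ct_exp n \<alpha> \<gamma> m (fun_upd2 p i j (p i j + 1)) l = 0"
      using t tp assms
      by (auto simp: ct_tuples_def ct_exp_upd_p ct_exp_upd_alpha ct_exp_upd_gamma split: if_splits)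
    then show "(case t of (m, p) \<Rightarrow> (m, fun_upd2 p i j (p i j + 1))) \<in> {t\<in>ct_tuples n \<alpha> \<gamma>. snd t i j \<noteq> 0}"
      using t tp assms by (auto simp: ct_tuples_def)
  qed
  finally show ?thesis
    by simp
qed

lemma ct_tuples_raise_upper_alpha_gamma:
  assumes "i < j" and "j < n"
  shows "ct_tuples n (\<alpha>(j := \<alpha> j + 1)) (fun_upd2 \<gamma> i j (Suc (\<gamma> i j))) = ct_tuples n \<alpha> \<gamma>"
  using assms by (auto simp: ct_tuples_def ct_exp_upd_alpha ct_exp_upd_gamma)

lemma ct_weight_factor_m:
  assumes "i < n"
  shows "ct_weight n \<beta> \<gamma> m p = ser_coeff (\<beta> i) (m i) * ct_weight n (\<beta>(i := 0)) \<gamma> (m(i := 0)) p"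
proof -
  have "(\<Prod>l\<in>{..<n} - {i}. ser_coeff ((\<beta>(i := 0)) l) ((m(i := 0)) l))
      = (\<Prod>l\<in>{..<n} - {i}. ser_coeff (\<beta> l) (m l))"
    by (rule prod.cong) auto
  then show ?thesis
    using assms unfolding ct_weight_def by (simp add: prod.remove[OF finite_lessThan, of i])
qed

lemma ct_weight_factor_p:
  assumes "i < j" and "j < n"
  shows "ct_weight n \<beta> \<gamma> m p
       = ser_coeff (\<gamma> i j) (p i j) * ct_weight n \<beta> (fun_upd2 \<gamma> i j 0) m (fun_upd2 p i j 0)"
proof -
  have ij: "(i, j) \<in> index_pairs n"
    using assms by (simp add: index_pairs_def)
  have "(\<Prod>(a, b)\<in>index_pairs n - {(i, j)}. ser_coeff (fun_upd2 \<gamma> i j 0 a b) (fun_upd2 p i j 0 a b))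
      = (\<Prod>(a, b)\<in>index_pairs n - {(i, j)}. ser_coeff (\<gamma> a b) (p a b))"
    by (rule prod.cong) (auto split: if_splits)
  then show ?thesis
    unfolding ct_weight_def by (simp add: prod.remove[OF finite_index_pairs ij])
qed

section \<open>Contiguity relations\<close>

text \<open>\<open>(1 - x\<^sub>i)\<^bsup>-\<beta>\<^esup> = (1 - x\<^sub>i)\<^bsup>-\<beta>-1\<^esup> - x\<^sub>i (1 - x\<^sub>i)\<^bsup>-\<beta>-1\<^esup>\<close>\<close>

lemma ct_split_beta:
  assumes "i < n"
  shows "ct n \<alpha> \<beta> \<gamma> = ct n \<alpha> (\<beta>(i := Suc (\<beta> i))) \<gamma> - ct n (\<alpha>(i := \<alpha> i + 1)) (\<beta>(i := Suc (\<beta> i))) \<gamma>"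
proof -
  let ?\<beta> = "\<beta>(i := Suc (\<beta> i))"
  let ?rest = "\<lambda>m p. ct_weight n (\<beta>(i := 0)) \<gamma> (m(i := 0)) p"
  let ?c = "ser_coeff (Suc (\<beta> i))"
  have w: "ct_weight n ?\<beta> \<gamma> m p = ?c (m i) * ?rest m p" for m p
    using ct_weight_factor_m[OF assms, of ?\<beta> \<gamma> m p] by simp
  have "ct n \<alpha> \<beta> \<gamma>
      = (\<Sum>(m, p)\<in>ct_tuples n \<alpha> \<gamma>. ?c (m i) * ?rest m p - (if m i = 0 then 0 else ?c (m i - 1) * ?rest m p))"
    unfolding ct_def ct_weight_factor_m[OF assms, of \<beta>] ser_coeff_eq_diff[of "\<beta> i"]
    by (intro sum.cong refl) (auto simp: algebra_simps)
  also have "\<dots> = ct n \<alpha> ?\<beta> \<gamma> - ct n (\<alpha>(i := \<alpha> i + 1)) ?\<beta> \<gamma>"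
    unfolding ct_def sum_ct_tuples_raise_alpha[OF assms]
    by (simp add: w case_prod_unfold sum_subtractf[symmetric] cong: if_cong)
  finally show ?thesis .
qed

text \<open>\<open>(x\<^sub>j - x\<^sub>i)\<^bsup>-\<gamma>\<^esup> = (x\<^sub>j - x\<^sub>i)\<^bsup>-\<gamma>-1\<^esup> (x\<^sub>j - x\<^sub>i)\<close>\<close>

lemma ct_split_gamma:
  assumes "i < j" and "j < n"
  shows "ct n \<alpha> \<beta> \<gamma> = ct n (\<alpha>(j := \<alpha> j + 1)) \<beta> (fun_upd2 \<gamma> i j (Suc (\<gamma> i j)))
                       - ct n (\<alpha>(i := \<alpha> i + 1)) \<beta> (fun_upd2 \<gamma> i j (Suc (\<gamma> i j)))"
proof -
  let ?\<gamma> = "fun_upd2 \<gamma> i j (Suc (\<gamma> i j))"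
  let ?rest = "\<lambda>m p. ct_weight n \<beta> (fun_upd2 \<gamma> i j 0) m (fun_upd2 p i j 0)"
  let ?c = "ser_coeff (Suc (\<gamma> i j))"
  have w: "ct_weight n \<beta> ?\<gamma> m p = ?c (p i j) * ?rest m p" for m p
    using ct_weight_factor_p[OF assms, of \<beta> ?\<gamma> m p] by simp
  have "ct n \<alpha> \<beta> \<gamma>
      = (\<Sum>(m, p)\<in>ct_tuples n \<alpha> \<gamma>. ?c (p i j) * ?rest m p - (if p i j = 0 then 0 else ?c (p i j - 1) * ?rest m p))"
    unfolding ct_def ct_weight_factor_p[OF assms, of \<beta> \<gamma>] ser_coeff_eq_diff[of "\<gamma> i j"]
    by (intro sum.cong refl) (auto simp: algebra_simps)
  also have "\<dots> = ct n (\<alpha>(j := \<alpha> j + 1)) \<beta> ?\<gamma> - ct n (\<alpha>(i := \<alpha> i + 1)) \<beta> ?\<gamma>"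
    unfolding ct_def sum_ct_tuples_raise_alpha_gamma[OF assms] ct_tuples_raise_upper_alpha_gamma[OF assms]
    by (simp add: w case_prod_unfold sum_subtractf[symmetric] cong: if_cong)
  finally show ?thesis .
qed

lemma sum_ct_tuples_m_mult_weight:
  assumes "i < n"
  shows "(\<Sum>(m, p)\<in>ct_tuples n \<alpha> \<gamma>. real (m i) * ct_weight n \<beta> \<gamma> m p)
       = real (\<beta> i) * ct n (\<alpha>(i := \<alpha> i + 1)) (\<beta>(i := Suc (\<beta> i))) \<gamma>"
proof -
  let ?\<beta> = "\<beta>(i := Suc (\<beta> i))"
  let ?rest = "\<lambda>m p. ct_weight n (\<beta>(i := 0)) \<gamma> (m(i := 0)) p"
  have "real (\<beta> i) * ct_weight n ?\<beta> \<gamma> (m(i := m i - 1)) p = real (m i) * ct_weight n \<beta> \<gamma> m p"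
    if "m i \<noteq> 0" for m p
  proof -
    obtain q where q: "m i = Suc q"
      using \<open>m i \<noteq> 0\<close> not0_implies_Suc by blast
    have "ct_weight n ?\<beta> \<gamma> (m(i := m i - 1)) p = ser_coeff (Suc (\<beta> i)) q * ?rest m p"
      using ct_weight_factor_m[OF assms, of ?\<beta> \<gamma> "m(i := m i - 1)" p] q by simp
    then show ?thesis
      using Suc_mult_ser_coeff_Suc[of q "\<beta> i"] ct_weight_factor_m[OF assms, of \<beta> \<gamma> m p] q
      by simp
  qed
  then show ?thesis
    unfolding ct_def sum_ct_tuples_raise_alpha[OF assms] sum_distrib_left
    by (intro sum.cong refl) auto
qed

lemma sum_ct_tuples_p_mult_weight:
  assumes "i < j" and "j < n"
  shows "(\<Sum>(m, p)\<in>ct_tuples n \<alpha> \<gamma>. real (p i j) * ct_weight n \<beta> \<gamma> m p)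
       = real (\<gamma> i j) * ct n (\<alpha>(i := \<alpha> i + 1)) \<beta> (fun_upd2 \<gamma> i j (Suc (\<gamma> i j)))"
proof -
  let ?\<gamma> = "fun_upd2 \<gamma> i j (Suc (\<gamma> i j))"
  let ?rest = "\<lambda>m p. ct_weight n \<beta> (fun_upd2 \<gamma> i j 0) m (fun_upd2 p i j 0)"
  have "real (\<gamma> i j) * ct_weight n \<beta> ?\<gamma> m (fun_upd2 p i j (p i j - 1)) = real (p i j) * ct_weight n \<beta> \<gamma> m p"
    if "p i j \<noteq> 0" for m p
  proof -
    obtain q where q: "p i j = Suc q"
      using \<open>p i j \<noteq> 0\<close> not0_implies_Suc by blast
    have "ct_weight n \<beta> ?\<gamma> m (fun_upd2 p i j (p i j - 1)) = ser_coeff (Suc (\<gamma> i j)) q * ?rest m p"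
      using ct_weight_factor_p[OF assms, of \<beta> ?\<gamma> m "fun_upd2 p i j (p i j - 1)"] q by simp
    then show ?thesis
      using Suc_mult_ser_coeff_Suc[of q "\<gamma> i j"] ct_weight_factor_p[OF assms, of \<beta> \<gamma> m p] q
      by simp
  qed
  then show ?thesis
    unfolding ct_def sum_ct_tuples_raise_alpha_gamma[OF assms] sum_distrib_left
    by (intro sum.cong refl) auto
qed

lemma sum_ct_tuples_gamma_add_p_mult_weight:
  assumes "j < i" and "i < n"
  shows "(\<Sum>(m, p)\<in>ct_tuples n \<alpha> \<gamma>. (real (\<gamma> j i) + real (p j i)) * ct_weight n \<beta> \<gamma> m p)
       = real (\<gamma> j i) * ct n (\<alpha>(i := \<alpha> i + 1)) \<beta> (fun_upd2 \<gamma> j i (Suc (\<gamma> j i)))"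
proof -
  have "(real (\<gamma> j i) + real (p j i)) * ct_weight n \<beta> \<gamma> m p
      = real (\<gamma> j i) * ct_weight n \<beta> (fun_upd2 \<gamma> j i (Suc (\<gamma> j i))) m p" for m p
    using add_mult_ser_coeff[of "\<gamma> j i" "p j i"]
      ct_weight_factor_p[OF assms, of \<beta> \<gamma> m p]
      ct_weight_factor_p[OF assms, of \<beta> "fun_upd2 \<gamma> j i (Suc (\<gamma> j i))" m p]
    by simp
  then show ?thesis
    unfolding ct_def ct_tuples_raise_upper_alpha_gamma[OF assms] sum_distrib_left
    by (intro sum.cong refl) auto
qed

text \<open>The constant term of \<open>x\<^sub>i \<partial>F/\<partial>x\<^sub>i\<close> vanishes: on the expansion of \<open>F\<close> this operator
  multiplies each monomial by its exponent \<open>ct_exp\<close> of \<open>x\<^sub>i\<close>, while applied factor by factor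
  to \<open>F\<close> it produces the four terms below.\<close>

lemma ct_euler:
  assumes "i < n"
  shows "of_int (\<alpha> i) * ct n \<alpha> \<beta> \<gamma> + real (\<beta> i) * ct n (\<alpha>(i := \<alpha> i + 1)) (\<beta>(i := Suc (\<beta> i))) \<gamma>
   + (\<Sum>j\<in>{i<..<n}. real (\<gamma> i j) * ct n (\<alpha>(i := \<alpha> i + 1)) \<beta> (fun_upd2 \<gamma> i j (Suc (\<gamma> i j))))
   - (\<Sum>j<i. real (\<gamma> j i) * ct n (\<alpha>(i := \<alpha> i + 1)) \<beta> (fun_upd2 \<gamma> j i (Suc (\<gamma> j i)))) = 0"
proof -
  let ?T = "ct_tuples n \<alpha> \<gamma>"
  let ?w = "\<lambda>t. ct_weight n \<beta> \<gamma> (fst t) (snd t)"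
  have "0 = (\<Sum>t\<in>?T. of_int (ct_exp n \<alpha> \<gamma> (fst t) (snd t) i) * ?w t)"
    using assms by (intro sum.neutral[symmetric]) (auto simp: ct_tuples_def)
  also have "\<dots> = (\<Sum>t\<in>?T. of_int (\<alpha> i) * ?w t + real (fst t i) * ?w t
      + (\<Sum>j\<in>{i<..<n}. real (snd t i j) * ?w t) - (\<Sum>j<i. (real (\<gamma> j i) + real (snd t j i)) * ?w t))"
    by (intro sum.cong refl) (simp add: ct_exp_def ring_distribs sum_distrib_right sum.distrib sum_subtractf)
  also have "\<dots> = of_int (\<alpha> i) * (\<Sum>t\<in>?T. ?w t) + (\<Sum>t\<in>?T. real (fst t i) * ?w t)
      + (\<Sum>j\<in>{i<..<n}. \<Sum>t\<in>?T. real (snd t i j) * ?w t)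
      - (\<Sum>j<i. \<Sum>t\<in>?T. (real (\<gamma> j i) + real (snd t j i)) * ?w t)"
    by (simp add: sum.distrib sum_subtractf sum_distrib_left sum.swap[of _ "{i<..<n}"] sum.swap[of _ "{..<i}"])
  also have "(\<Sum>t\<in>?T. ?w t) = ct n \<alpha> \<beta> \<gamma>"
    by (simp add: ct_def case_prod_unfold)
  also have "(\<Sum>t\<in>?T. real (fst t i) * ?w t) = real (\<beta> i) * ct n (\<alpha>(i := \<alpha> i + 1)) (\<beta>(i := Suc (\<beta> i))) \<gamma>"
    using sum_ct_tuples_m_mult_weight[OF assms] by (simp add: case_prod_unfold)
  also have "(\<Sum>j\<in>{i<..<n}. \<Sum>t\<in>?T. real (snd t i j) * ?w t)
     = (\<Sum>j\<in>{i<..<n}. real (\<gamma> i j) * ct n (\<alpha>(i := \<alpha> i + 1)) \<beta> (fun_upd2 \<gamma> i j (Suc (\<gamma> i j))))"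
    using sum_ct_tuples_p_mult_weight by (intro sum.cong refl) (simp add: case_prod_unfold)
  also have "(\<Sum>j<i. \<Sum>t\<in>?T. (real (\<gamma> j i) + real (snd t j i)) * ?w t)
     = (\<Sum>j<i. real (\<gamma> j i) * ct n (\<alpha>(i := \<alpha> i + 1)) \<beta> (fun_upd2 \<gamma> j i (Suc (\<gamma> j i))))"
    using sum_ct_tuples_gamma_add_p_mult_weight assms by (intro sum.cong refl) (simp add: case_prod_unfold)
  finally show ?thesis
    by linarith
qed

section \<open>Counting subsets\<close>

definition ksubsets :: "nat \<Rightarrow> nat \<Rightarrow> nat set set" where
  "ksubsets n k = {S. S \<subseteq> {..<n} \<and> card S = k}"

lemma finite_ksubsets [simp]: "finite (ksubsets n k)"
proof -
  have "ksubsets n k \<subseteq> Pow {..<n}"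
    unfolding ksubsets_def by auto
  then show ?thesis
    by (rule finite_subset) auto
qed

lemma finite_ksubsets_member: "T \<in> ksubsets n k \<Longrightarrow> finite T"
  unfolding ksubsets_def by (auto intro: finite_subset)

lemma ksubsets_0 [simp]: "ksubsets n 0 = {{}}"
  unfolding ksubsets_def by (auto dest: finite_subset[OF _ finite_lessThan])

lemma ksubsets_self: "ksubsets n n = {{..<n}}"
proof -
  have "S = {..<n}" if "S \<subseteq> {..<n}" and "card S = n" for S
    using that by (intro card_subset_eq) auto
  then show ?thesis
    unfolding ksubsets_def by auto
qed

lemma card_lessThan_diff_ksubset:
  assumes "T \<in> ksubsets n k"
  shows "card ({..<n} - T) = n - k"
  using assms finite_ksubsets_member[OF assms] unfolding ksubsets_def by (simp add: card_Diff_subset)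

lemma sum_filter_conj_split:
  assumes "finite A"
  shows "(\<Sum>x\<in>{x\<in>A. P x}. g x) = (\<Sum>x\<in>{x\<in>A. P x \<and> Q x}. g x) + (\<Sum>x\<in>{x\<in>A. P x \<and> \<not> Q x}. g x)"
proof -
  have "(\<Sum>x\<in>{x\<in>A. P x}. g x) = (\<Sum>x\<in>{x\<in>A. P x \<and> Q x} \<union> {x\<in>A. P x \<and> \<not> Q x}. g x)"
    by (rule sum.cong) auto
  also have "\<dots> = (\<Sum>x\<in>{x\<in>A. P x \<and> Q x}. g x) + (\<Sum>x\<in>{x\<in>A. P x \<and> \<not> Q x}. g x)"
    using assms by (intro sum.union_disjoint) auto
  finally show ?thesis .
qed

lemma sum_ksubsets_avoiding:
  "(\<Sum>i<n. \<Sum>T\<in>{T\<in>ksubsets n k. i \<notin> T}. f T) = real (n - k) * (\<Sum>T\<in>ksubsets n k. f T)"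
proof -
  have "(\<Sum>i<n. \<Sum>T\<in>{T\<in>ksubsets n k. i \<notin> T}. f T)
      = (\<Sum>T\<in>ksubsets n k. \<Sum>i\<in>{i. i \<in> {..<n} \<and> i \<notin> T}. f T)"
    by (rule sum.swap_restrict) auto
  also have "\<dots> = (\<Sum>T\<in>ksubsets n k. real (n - k) * f T)"
  proof (rule sum.cong[OF refl])
    fix T assume "T \<in> ksubsets n k"
    moreover have "{i. i \<in> {..<n} \<and> i \<notin> T} = {..<n} - T"
      by auto
    ultimately show "(\<Sum>i\<in>{i. i \<in> {..<n} \<and> i \<notin> T}. f T) = real (n - k) * f T"
      using card_lessThan_diff_ksubset by simp
  qed
  finally show ?thesis
    by (simp add: sum_distrib_left)
qed

lemma sum_ksubsets_insert:
  "(\<Sum>i<n. \<Sum>T\<in>{T\<in>ksubsets n k. i \<notin> T}. f (insert i T)) = real (Suc k) * (\<Sum>V\<in>ksubsets n (Suc k). f V)"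
proof -
  have "(\<Sum>i<n. \<Sum>T\<in>{T\<in>ksubsets n k. i \<notin> T}. f (insert i T))
      = (\<Sum>(i, T)\<in>Sigma {..<n} (\<lambda>i. {T\<in>ksubsets n k. i \<notin> T}). f (insert i T))"
    by (rule sum.Sigma) auto
  also have "\<dots> = (\<Sum>(V, i)\<in>Sigma (ksubsets n (Suc k)) (\<lambda>V. V). f V)"
  proof (rule sum.reindex_bij_witness[where i = "\<lambda>(V, i). (i, V - {i})" and j = "\<lambda>(i, T). (insert i T, i)"])
    fix x assume x: "x \<in> Sigma {..<n} (\<lambda>i. {T\<in>ksubsets n k. i \<notin> T})"
    then obtain i T where xt: "x = (i, T)" and "finite T"
      using finite_ksubsets_member by blast
    then show "(case (case x of (i, T) \<Rightarrow> (insert i T, i)) of (V, i) \<Rightarrow> (i, V - {i})) = x"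
      and "(case x of (i, T) \<Rightarrow> (insert i T, i)) \<in> Sigma (ksubsets n (Suc k)) (\<lambda>V. V)"
      and "(case (case x of (i, T) \<Rightarrow> (insert i T, i)) of (V, i) \<Rightarrow> f V) = (case x of (i, T) \<Rightarrow> f (insert i T))"
      using x unfolding ksubsets_def by auto
  next
    fix y assume y: "y \<in> Sigma (ksubsets n (Suc k)) (\<lambda>V. V)"
    then obtain V i where yv: "y = (V, i)" and "finite V"
      using finite_ksubsets_member by blast
    then show "(case (case y of (V, i) \<Rightarrow> (i, V - {i})) of (i, T) \<Rightarrow> (insert i T, i)) = y"
      and "(case y of (V, i) \<Rightarrow> (i, V - {i})) \<in> Sigma {..<n} (\<lambda>i. {T\<in>ksubsets n k. i \<notin> T})"
      using y unfolding ksubsets_def by auto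
  qed
  also have "\<dots> = (\<Sum>V\<in>ksubsets n (Suc k). \<Sum>i\<in>V. f V)"
    by (rule sum.Sigma[symmetric]) (auto intro: finite_ksubsets_member)
  also have "\<dots> = (\<Sum>V\<in>ksubsets n (Suc k). real (Suc k) * f V)"
    by (rule sum.cong) (auto simp: ksubsets_def)
  finally show ?thesis
    by (simp add: sum_distrib_left)
qed

lemma sum_index_pairs_ksubsets_avoiding:
  "(\<Sum>x\<in>index_pairs n. \<Sum>T\<in>{T\<in>ksubsets n k. fst x \<notin> T \<and> snd x \<notin> T}. f T)
     = real ((n - k) choose 2) * (\<Sum>T\<in>ksubsets n k. f T)"
proof -
  have "(\<Sum>x\<in>index_pairs n. \<Sum>T\<in>{T\<in>ksubsets n k. fst x \<notin> T \<and> snd x \<notin> T}. f T)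
      = (\<Sum>T\<in>ksubsets n k. \<Sum>x\<in>{x. x \<in> index_pairs n \<and> fst x \<notin> T \<and> snd x \<notin> T}. f T)"
    by (rule sum.swap_restrict) auto
  also have "\<dots> = (\<Sum>T\<in>ksubsets n k. real ((n - k) choose 2) * f T)"
  proof (rule sum.cong[OF refl])
    fix T assume T: "T \<in> ksubsets n k"
    have "{x. x \<in> index_pairs n \<and> fst x \<notin> T \<and> snd x \<notin> T}
        = {x \<in> index_pairs n. fst x \<in> {..<n} - T \<and> snd x \<in> {..<n} - T}"
      by (auto simp: index_pairs_def)
    then show "(\<Sum>x\<in>{x. x \<in> index_pairs n \<and> fst x \<notin> T \<and> snd x \<notin> T}. f T) = real ((n - k) choose 2) * f T"
      using card_index_pairs_within[of "{..<n} - T" n] card_lessThan_diff_ksubset[OF T] by simp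
  qed
  finally show ?thesis
    by (simp add: sum_distrib_left)
qed

lemma sum_index_pairs_ksubsets_insert:
  "(\<Sum>x\<in>index_pairs n. \<Sum>T\<in>{T\<in>ksubsets n k. fst x \<notin> T \<and> snd x \<in> T}. f (insert (fst x) T))
     = real (Suc k choose 2) * (\<Sum>V\<in>ksubsets n (Suc k). f V)"
proof -
  have "(\<Sum>x\<in>index_pairs n. \<Sum>T\<in>{T\<in>ksubsets n k. fst x \<notin> T \<and> snd x \<in> T}. f (insert (fst x) T))
      = (\<Sum>(x, T)\<in>Sigma (index_pairs n) (\<lambda>x. {T\<in>ksubsets n k. fst x \<notin> T \<and> snd x \<in> T}). f (insert (fst x) T))"
    by (rule sum.Sigma) auto
  also have "\<dots> = (\<Sum>(V, x)\<in>Sigma (ksubsets n (Suc k)) (\<lambda>V. {x\<in>index_pairs n. fst x \<in> V \<and> snd x \<in> V}). f V)"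
  proof (rule sum.reindex_bij_witness[where i = "\<lambda>(V, x). (x, V - {fst x})"
        and j = "\<lambda>(x, T). (insert (fst x) T, x)"])
    fix y assume y: "y \<in> Sigma (index_pairs n) (\<lambda>x. {T\<in>ksubsets n k. fst x \<notin> T \<and> snd x \<in> T})"
    then obtain x T where yt: "y = (x, T)" and "finite T"
      using finite_ksubsets_member by blast
    then show "(case (case y of (x, T) \<Rightarrow> (insert (fst x) T, x)) of (V, x) \<Rightarrow> (x, V - {fst x})) = y"
      and "(case y of (x, T) \<Rightarrow> (insert (fst x) T, x))
          \<in> Sigma (ksubsets n (Suc k)) (\<lambda>V. {x\<in>index_pairs n. fst x \<in> V \<and> snd x \<in> V})"
      and "(case (case y of (x, T) \<Rightarrow> (insert (fst x) T, x)) of (V, x) \<Rightarrow> f V)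
          = (case y of (x, T) \<Rightarrow> f (insert (fst x) T))"
      using y unfolding ksubsets_def index_pairs_def by auto
  next
    fix z assume z: "z \<in> Sigma (ksubsets n (Suc k)) (\<lambda>V. {x\<in>index_pairs n. fst x \<in> V \<and> snd x \<in> V})"
    then obtain V x where zv: "z = (V, x)" and "finite V"
      using finite_ksubsets_member by blast
    then show "(case (case z of (V, x) \<Rightarrow> (x, V - {fst x})) of (x, T) \<Rightarrow> (insert (fst x) T, x)) = z"
      and "(case z of (V, x) \<Rightarrow> (x, V - {fst x}))
          \<in> Sigma (index_pairs n) (\<lambda>x. {T\<in>ksubsets n k. fst x \<notin> T \<and> snd x \<in> T})"
      using z unfolding ksubsets_def index_pairs_def by auto
  qed
  also have "\<dots> = (\<Sum>V\<in>ksubsets n (Suc k). \<Sum>x\<in>{x\<in>index_pairs n. fst x \<in> V \<and> snd x \<in> V}. f V)"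
    by (rule sum.Sigma[symmetric]) auto
  also have "\<dots> = (\<Sum>V\<in>ksubsets n (Suc k). real (Suc k choose 2) * f V)"
    by (rule sum.cong[OF refl]) (simp add: card_index_pairs_within ksubsets_def)
  finally show ?thesis
    by (simp add: sum_distrib_left)
qed

lemma sum_ksubsets_exchange:
  assumes "i < n" and "j < n"
  shows "(\<Sum>T\<in>{T\<in>ksubsets n k. j \<notin> T \<and> i \<in> T}. g T)
       = (\<Sum>T\<in>{T\<in>ksubsets n k. i \<notin> T \<and> j \<in> T}. g (insert i (T - {j})))"
proof (rule sum.reindex_bij_witness[symmetric, where i = "\<lambda>T. insert j (T - {i})" and j = "\<lambda>T. insert i (T - {j})"])
  fix T assume T: "T \<in> {T\<in>ksubsets n k. i \<notin> T \<and> j \<in> T}"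
  then have "finite T"
    using finite_ksubsets_member by blast
  have "card (insert i (T - {j})) = Suc (card (T - {j}))"
    using T \<open>finite T\<close> by (intro card_insert_disjoint) auto
  also have "\<dots> = card T"
    using T \<open>finite T\<close> by (intro card_Suc_Diff1) auto
  finally have "card (insert i (T - {j})) = card T" .
  then show "insert i (T - {j}) \<in> {T\<in>ksubsets n k. j \<notin> T \<and> i \<in> T}"
    using T assms(1) unfolding ksubsets_def by auto
  show "insert j (insert i (T - {j}) - {i}) = T"
    using T by auto
  show "g (insert i (T - {j})) = g (insert i (T - {j}))" ..
next
  fix T assume T: "T \<in> {T\<in>ksubsets n k. j \<notin> T \<and> i \<in> T}"
  then have "finite T"
    using finite_ksubsets_member by blast
  have "card (insert j (T - {i})) = Suc (card (T - {i}))"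
    using T \<open>finite T\<close> by (intro card_insert_disjoint) auto
  also have "\<dots> = card T"
    using T \<open>finite T\<close> by (intro card_Suc_Diff1) auto
  finally have "card (insert j (T - {i})) = card T" .
  then show "insert j (T - {i}) \<in> {T\<in>ksubsets n k. i \<notin> T \<and> j \<in> T}"
    using T assms(2) unfolding ksubsets_def by auto
  show "insert i (insert j (T - {i}) - {j}) = T"
    using T by auto
qed

section \<open>The summands of \<^const>\<open>Psi\<close>\<close>

definition psi_alpha :: "nat \<Rightarrow> nat set \<Rightarrow> nat \<Rightarrow> int" where
  "psi_alpha a S i = 1 - int a + (if i \<in> S then 1 else 0)"

definition psi_beta :: "nat \<Rightarrow> nat set \<Rightarrow> nat \<Rightarrow> nat" where
  "psi_beta b S i = b + (if i \<in> S then 1 else 0)"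

lemma psi_alpha_insert: "i \<notin> S \<Longrightarrow> (psi_alpha a S)(i := psi_alpha a S i + 1) = psi_alpha a (insert i S)"
  by (auto simp: psi_alpha_def fun_eq_iff)

lemma psi_beta_insert: "i \<notin> S \<Longrightarrow> (psi_beta b S)(i := Suc (psi_beta b S i)) = psi_beta b (insert i S)"
  by (auto simp: psi_beta_def fun_eq_iff)

text \<open>The summand of \<^const>\<open>Psi\<close> in which the factor \<open>t x\<^sub>i/(1 - x\<^sub>i)\<close> is chosen exactly
  for \<open>i \<in> S\<close>.\<close>

definition psi_term :: "nat \<Rightarrow> nat \<Rightarrow> nat \<Rightarrow> nat \<Rightarrow> nat set \<Rightarrow> real" where
  "psi_term n a b c S = ct n (psi_alpha a S) (psi_beta b S) (\<lambda>_ _. c)"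

text \<open>The constant term of \<open>x\<^sub>l/(x\<^sub>j - x\<^sub>i)\<close> times the integrand of \<^term>\<open>psi_term n a b c T\<close>.\<close>

definition psi_pair_term :: "nat \<Rightarrow> nat \<Rightarrow> nat \<Rightarrow> nat \<Rightarrow> nat set \<Rightarrow> nat \<Rightarrow> nat \<Rightarrow> nat \<Rightarrow> real" where
  "psi_pair_term n a b c T l i j =
     ct n ((psi_alpha a T)(l := psi_alpha a T l + 1)) (psi_beta b T) (fun_upd2 (\<lambda>_ _. c) i j (Suc c))"

lemma Psi_eq_sum_psi_term: "Psi n k a b c = (\<Sum>S\<in>ksubsets n k. psi_term n a b c S)"
  unfolding Psi_def ksubsets_def
proof (intro sum.cong refl)
  fix S
  have "psi_tuples n a c S = ct_tuples n (psi_alpha a S) (\<lambda>_ _. c)"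
    unfolding psi_tuples_def ct_tuples_def psi_exp_def ct_exp_def psi_alpha_def by auto
  then show "(\<Sum>(m, p)\<in>psi_tuples n a c S.
          (\<Prod>i<n. pochhammer (real (b + (if i \<in> S then 1 else 0))) (m i) / fact (m i))
          * (\<Prod>(i, j)\<in>{(i, j). i < j \<and> j < n}. pochhammer (real c) (p i j) / fact (p i j)))
      = psi_term n a b c S"
    unfolding psi_term_def ct_def ct_weight_def ser_coeff_def psi_beta_def index_pairs_def by simp
qed

lemma psi_term_euler:
  assumes "i < n" and "i \<notin> T"
  shows "(1 - real a) * psi_term n a b c T + real b * psi_term n a b c (insert i T)
     + (\<Sum>j\<in>{i<..<n}. real c * psi_pair_term n a b c T i i j)
     - (\<Sum>j<i. real c * psi_pair_term n a b c T i j i) = 0"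
proof -
  have "of_int (psi_alpha a T i) = 1 - real a" and "psi_beta b T i = b"
    using assms by (simp_all add: psi_alpha_def psi_beta_def)
  then show ?thesis
    using ct_euler[OF assms(1), of "psi_alpha a T" "psi_beta b T" "\<lambda>_ _. c"] assms
    by (simp add: psi_term_def psi_pair_term_def psi_alpha_insert psi_beta_insert[symmetric])
qed

lemma psi_term_split:
  assumes "i < j" and "j < n"
  shows "psi_term n a b c T = psi_pair_term n a b c T j i j - psi_pair_term n a b c T i i j"
  using ct_split_gamma[OF assms, of "psi_alpha a T" "psi_beta b T" "\<lambda>_ _. c"]
  by (simp add: psi_term_def psi_pair_term_def)

text \<open>Splitting \<open>(1 - x\<^sub>i)\<^bsup>-b\<^esup>\<close> and \<open>(1 - x\<^sub>j)\<^bsup>-b\<^esup>\<close> shows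
  \<open>x\<^sub>i F\<^bsub>U+j\<^esub> - x\<^sub>j F\<^bsub>U+i\<^esub> = (x\<^sub>j - x\<^sub>i) F\<^bsub>U+i+j\<^esub>\<close>.\<close>

lemma psi_pair_term_exchange:
  assumes "i < j" and "j < n" and "i \<notin> T" and "j \<in> T"
  shows "psi_pair_term n a b c T i i j - psi_pair_term n a b c (insert i (T - {j})) j i j
       = psi_term n a b c (insert i T)"
proof -
  define U where "U = T - {j}"
  let ?V = "insert i T"
  let ?\<gamma> = "fun_upd2 (\<lambda>_ _. c) i j (Suc c)"
  have T: "T = insert j U" and "i \<notin> U" and "j \<notin> U" and U: "insert i (T - {j}) = insert i U"
    using assms unfolding U_def by auto
  have \<alpha>_i: "(psi_alpha a T)(i := psi_alpha a T i + 1) = psi_alpha a ?V"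
    using assms by (simp add: psi_alpha_insert)
  have \<alpha>_j: "(psi_alpha a (insert i U))(j := psi_alpha a (insert i U) j + 1) = psi_alpha a ?V"
    using assms \<open>j \<notin> U\<close> unfolding T by (simp add: psi_alpha_insert insert_commute)
  have \<beta>_i: "(psi_beta b T)(i := Suc (psi_beta b T i)) = psi_beta b ?V"
    using assms by (simp add: psi_beta_insert)
  have \<beta>_j: "(psi_beta b (insert i U))(j := Suc (psi_beta b (insert i U) j)) = psi_beta b ?V"
    using assms \<open>j \<notin> U\<close> unfolding T by (simp add: psi_beta_insert insert_commute)
  have split_i: "ct n (psi_alpha a ?V) (psi_beta b T) ?\<gamma>
      = ct n (psi_alpha a ?V) (psi_beta b ?V) ?\<gamma> - ct n ((psi_alpha a ?V)(i := psi_alpha a ?V i + 1)) (psi_beta b ?V) ?\<gamma>"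
    using ct_split_beta[of i n "psi_alpha a ?V" "psi_beta b T" ?\<gamma>] assms \<beta>_i by simp
  have split_j: "ct n (psi_alpha a ?V) (psi_beta b (insert i U)) ?\<gamma>
      = ct n (psi_alpha a ?V) (psi_beta b ?V) ?\<gamma> - ct n ((psi_alpha a ?V)(j := psi_alpha a ?V j + 1)) (psi_beta b ?V) ?\<gamma>"
    using ct_split_beta[of j n "psi_alpha a ?V" "psi_beta b (insert i U)" ?\<gamma>] assms \<beta>_j by simp
  have "psi_term n a b c ?V = ct n ((psi_alpha a ?V)(j := psi_alpha a ?V j + 1)) (psi_beta b ?V) ?\<gamma>
       - ct n ((psi_alpha a ?V)(i := psi_alpha a ?V i + 1)) (psi_beta b ?V) ?\<gamma>"
    using ct_split_gamma[OF assms(1,2), of "psi_alpha a ?V" "psi_beta b ?V" "\<lambda>_ _. c"] by (simp add: psi_term_def)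
  then show ?thesis
    unfolding psi_pair_term_def U \<alpha>_i \<alpha>_j using split_i split_j by simp
qed

lemma psi_pair_sum_eq:
  assumes "i < j" and "j < n"
  shows "(\<Sum>T\<in>{T\<in>ksubsets n k. i \<notin> T}. psi_pair_term n a b c T i i j)
       - (\<Sum>T\<in>{T\<in>ksubsets n k. j \<notin> T}. psi_pair_term n a b c T j i j)
     = (\<Sum>T\<in>{T\<in>ksubsets n k. i \<notin> T \<and> j \<in> T}. psi_term n a b c (insert i T))
       - (\<Sum>T\<in>{T\<in>ksubsets n k. i \<notin> T \<and> j \<notin> T}. psi_term n a b c T)"
proof -
  let ?G = "psi_pair_term n a b c"
  let ?A = "{T\<in>ksubsets n k. i \<notin> T \<and> j \<notin> T}"
  let ?B = "{T\<in>ksubsets n k. i \<notin> T \<and> j \<in> T}"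
  have split_i: "(\<Sum>T\<in>{T\<in>ksubsets n k. i \<notin> T}. ?G T i i j) = (\<Sum>T\<in>?A. ?G T i i j) + (\<Sum>T\<in>?B. ?G T i i j)"
    by (subst sum_filter_conj_split[where Q = "\<lambda>T. j \<notin> T"]) simp_all
  have "(\<Sum>T\<in>{T\<in>ksubsets n k. j \<notin> T}. ?G T j i j)
      = (\<Sum>T\<in>?A. ?G T j i j) + (\<Sum>T\<in>{T\<in>ksubsets n k. j \<notin> T \<and> i \<in> T}. ?G T j i j)"
    by (subst sum_filter_conj_split[where Q = "\<lambda>T. i \<notin> T"]) (simp_all add: conj_commute)
  also have "(\<Sum>T\<in>{T\<in>ksubsets n k. j \<notin> T \<and> i \<in> T}. ?G T j i j) = (\<Sum>T\<in>?B. ?G (insert i (T - {j})) j i j)"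
    using assms by (intro sum_ksubsets_exchange) auto
  finally have split_j: "(\<Sum>T\<in>{T\<in>ksubsets n k. j \<notin> T}. ?G T j i j)
      = (\<Sum>T\<in>?A. ?G T j i j) + (\<Sum>T\<in>?B. ?G (insert i (T - {j})) j i j)" .
  have "(\<Sum>T\<in>?A. ?G T i i j) - (\<Sum>T\<in>?A. ?G T j i j) = - (\<Sum>T\<in>?A. psi_term n a b c T)"
    using psi_term_split[OF assms] by (simp add: sum_subtractf[symmetric] sum_negf[symmetric])
  moreover have "(\<Sum>T\<in>?B. ?G T i i j) - (\<Sum>T\<in>?B. ?G (insert i (T - {j})) j i j)
      = (\<Sum>T\<in>?B. psi_term n a b c (insert i T))"
    using psi_pair_term_exchange[OF assms] by (simp add: sum_subtractf[symmetric])
  ultimately show ?thesis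
    using split_i split_j by linarith
qed

lemma Psi_euler_sum:
  "(1 - real a) * real (n - k) * Psi n k a b c + real b * real (Suc k) * Psi n (Suc k) a b c
   + real c * (\<Sum>(i, j)\<in>index_pairs n.
        (\<Sum>T\<in>{T\<in>ksubsets n k. i \<notin> T}. psi_pair_term n a b c T i i j)
      - (\<Sum>T\<in>{T\<in>ksubsets n k. j \<notin> T}. psi_pair_term n a b c T j i j)) = 0"
proof -
  let ?P = "psi_term n a b c"
  let ?G = "psi_pair_term n a b c"
  let ?X = "\<lambda>i. {T\<in>ksubsets n k. i \<notin> T}"
  have "(\<Sum>i<n. \<Sum>T\<in>?X i. (1 - real a) * ?P T + real b * ?P (insert i T)
      + (\<Sum>j\<in>{i<..<n}. real c * ?G T i i j) - (\<Sum>j<i. real c * ?G T i j i)) = 0"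
    by (intro sum.neutral ballI psi_term_euler) auto
  moreover have "(\<Sum>i<n. \<Sum>T\<in>?X i. (1 - real a) * ?P T + real b * ?P (insert i T)
      + (\<Sum>j\<in>{i<..<n}. real c * ?G T i i j) - (\<Sum>j<i. real c * ?G T i j i))
    = (1 - real a) * (\<Sum>i<n. \<Sum>T\<in>?X i. ?P T) + real b * (\<Sum>i<n. \<Sum>T\<in>?X i. ?P (insert i T))
      + real c * ((\<Sum>i<n. \<Sum>T\<in>?X i. \<Sum>j\<in>{i<..<n}. ?G T i i j) - (\<Sum>i<n. \<Sum>T\<in>?X i. \<Sum>j<i. ?G T i j i))"
    by (simp add: sum.distrib sum_subtractf sum_distrib_left algebra_simps)
  moreover have "(\<Sum>i<n. \<Sum>T\<in>?X i. \<Sum>j\<in>{i<..<n}. ?G T i i j) = (\<Sum>(i, j)\<in>index_pairs n. \<Sum>T\<in>?X i. ?G T i i j)"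
    by (subst sum_index_pairs_lower[symmetric]) (rule sum.cong[OF refl], rule sum.swap)
  moreover have "(\<Sum>i<n. \<Sum>T\<in>?X i. \<Sum>j<i. ?G T i j i) = (\<Sum>(j, i)\<in>index_pairs n. \<Sum>T\<in>?X i. ?G T i j i)"
    by (subst sum_index_pairs_upper[symmetric]) (rule sum.cong[OF refl], rule sum.swap)
  ultimately show ?thesis
    unfolding Psi_eq_sum_psi_term sum_ksubsets_avoiding sum_ksubsets_insert
    by (simp add: sum_subtractf case_prod_unfold)
qed

lemma Psi_pair_sum:
  "(\<Sum>(i, j)\<in>index_pairs n.
        (\<Sum>T\<in>{T\<in>ksubsets n k. i \<notin> T}. psi_pair_term n a b c T i i j)
      - (\<Sum>T\<in>{T\<in>ksubsets n k. j \<notin> T}. psi_pair_term n a b c T j i j))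
   = real (Suc k choose 2) * Psi n (Suc k) a b c - real ((n - k) choose 2) * Psi n k a b c"
proof -
  let ?P = "psi_term n a b c"
  have "(\<Sum>(i, j)\<in>index_pairs n.
        (\<Sum>T\<in>{T\<in>ksubsets n k. i \<notin> T}. psi_pair_term n a b c T i i j)
      - (\<Sum>T\<in>{T\<in>ksubsets n k. j \<notin> T}. psi_pair_term n a b c T j i j))
    = (\<Sum>x\<in>index_pairs n. (\<Sum>T\<in>{T\<in>ksubsets n k. fst x \<notin> T \<and> snd x \<in> T}. ?P (insert (fst x) T))
        - (\<Sum>T\<in>{T\<in>ksubsets n k. fst x \<notin> T \<and> snd x \<notin> T}. ?P T))"
    by (rule sum.cong) (auto simp: index_pairs_def psi_pair_sum_eq)
  also have "\<dots> = real (Suc k choose 2) * Psi n (Suc k) a b c - real ((n - k) choose 2) * Psi n k a b c"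
    unfolding sum_subtractf sum_index_pairs_ksubsets_insert sum_index_pairs_ksubsets_avoiding
      Psi_eq_sum_psi_term ..
  finally show ?thesis .
qed

lemma Psi_contiguity:
  assumes "k \<le> n"
  shows "real (Suc k) * (real b + real k * real c / 2) * Psi n (Suc k) a b c
       = (real n - real k) * (real a - 1 + (real n - real k - 1) * real c / 2) * Psi n k a b c"
proof -
  have choose_Suc_k: "real (Suc k choose 2) = (1 + real k) * real k / 2"
    using two_mult_choose_two[of "Suc k"] by (simp add: algebra_simps)
  have choose_n_k: "real ((n - k) choose 2) = (real n - real k) * (real n - real k - 1) / 2"
    using two_mult_choose_two[of "n - k"] assms by (simp add: of_nat_diff)
  have "(1 - real a) * (real n - real k) * Psi n k a b c + real b * (1 + real k) * Psi n (Suc k) a b c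
      + real c * ((1 + real k) * real k / 2 * Psi n (Suc k) a b c
        - (real n - real k) * (real n - real k - 1) / 2 * Psi n k a b c) = 0"
    using Psi_euler_sum[of a n k b c] assms unfolding Psi_pair_sum choose_Suc_k choose_n_k
    by (simp add: of_nat_diff)
  then show ?thesis
    by (simp add: algebra_simps)
qed

lemma Psi_n_eq_Psi_0:
  assumes "1 \<le> a"
  shows "Psi n n a b c = Psi n 0 (a - 1) (b + 1) c"
  unfolding Psi_eq_sum_psi_term ksubsets_0 ksubsets_self psi_term_def using assms
  by simp (rule ct_cong, auto simp: psi_alpha_def psi_beta_def of_nat_diff)

lemma Psi_0_1_b_0: "Psi n 0 1 b 0 = 1"
proof -
  have "ct_weighted_degree n (psi_alpha 1 {}) (\<lambda>_ _. 0) = 0"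
    unfolding ct_weighted_degree_def psi_alpha_def by simp
  then have "ct_tuples n (psi_alpha 1 {}) (\<lambda>_ _. 0) \<subseteq> {(\<lambda>_. 0, \<lambda>_ _. 0)}"
    using ct_tuples_bounded by (fastforce simp: fun_eq_iff)
  moreover have "(\<lambda>_. 0, \<lambda>_ _. 0) \<in> ct_tuples n (psi_alpha 1 {}) (\<lambda>_ _. 0)"
    by (simp add: ct_tuples_def ct_exp_def psi_alpha_def)
  ultimately have "ct_tuples n (psi_alpha 1 {}) (\<lambda>_ _. 0) = {(\<lambda>_. 0, \<lambda>_ _. 0)}"
    by blast
  then show ?thesis
    unfolding Psi_eq_sum_psi_term psi_term_def ct_def ct_weight_def by simp
qed

text \<open>The variable \<open>x\<^sub>0\<close> occurs in the expansion only with exponents at least \<open>\<alpha> 0\<close>.\<close>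

lemma ct_eq_0_if_exp_0_pos:
  assumes "0 < n" and "0 < \<alpha> 0"
  shows "ct n \<alpha> \<beta> \<gamma> = 0"
proof -
  have "(m, p) \<notin> ct_tuples n \<alpha> \<gamma>" for m p
  proof -
    have "0 \<le> (\<Sum>j\<in>{0<..<n}. int (p 0 j))"
      by (rule sum_nonneg) auto
    then have "ct_exp n \<alpha> \<gamma> m p 0 \<noteq> 0"
      using assms unfolding ct_exp_def by simp
    then show ?thesis
      using assms unfolding ct_tuples_def by auto
  qed
  then have "ct_tuples n \<alpha> \<gamma> = {}"
    by auto
  then show ?thesis
    unfolding ct_def by simp
qed

lemma ct_exp_drop_first:
  assumes "m 0 = 0" and "\<forall>j. p 0 j = 0"
  shows "ct_exp (Suc N) \<alpha> \<gamma> m p (Suc i)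
       = ct_exp N (\<lambda>i. \<alpha> (Suc i) - int (\<gamma> 0 (Suc i))) (\<lambda>i j. \<gamma> (Suc i) (Suc j))
           (\<lambda>i. m (Suc i)) (\<lambda>i j. p (Suc i) (Suc j)) i"
proof -
  have "{Suc i<..<Suc N} = Suc ` {i<..<N}"
  proof
    show "{Suc i<..<Suc N} \<subseteq> Suc ` {i<..<N}"
    proof
      fix x assume "x \<in> {Suc i<..<Suc N}"
      then have "x = Suc (x - 1)" and "x - 1 \<in> {i<..<N}"
        by auto
      then show "x \<in> Suc ` {i<..<N}"
        by blast
    qed
  qed auto
  then have "(\<Sum>j\<in>{Suc i<..<Suc N}. int (p (Suc i) j)) = (\<Sum>j\<in>{i<..<N}. int (p (Suc i) (Suc j)))"
    by (simp add: sum.reindex)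
  moreover have "(\<Sum>j<Suc i. int (\<gamma> j (Suc i)) + int (p j (Suc i)))
      = int (\<gamma> 0 (Suc i)) + (\<Sum>j<i. int (\<gamma> (Suc j) (Suc i)) + int (p (Suc j) (Suc i)))"
    by (subst sum.lessThan_Suc_shift) (simp add: assms)
  ultimately show ?thesis
    unfolding ct_exp_def by simp
qed

lemma ct_weight_drop_first:
  assumes "m 0 = 0" and "\<forall>j. p 0 j = 0"
  shows "ct_weight (Suc N) \<beta> \<gamma> m p
       = ct_weight N (\<lambda>i. \<beta> (Suc i)) (\<lambda>i j. \<gamma> (Suc i) (Suc j)) (\<lambda>i. m (Suc i)) (\<lambda>i j. p (Suc i) (Suc j))"
proof -
  let ?h = "\<lambda>(i, j). (Suc i, Suc j)"
  have "(\<Prod>i<Suc N. ser_coeff (\<beta> i) (m i)) = (\<Prod>i<N. ser_coeff (\<beta> (Suc i)) (m (Suc i)))"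
    by (subst prod.lessThan_Suc_shift) (simp add: assms)
  moreover have "(\<Prod>(i, j)\<in>index_pairs (Suc N). ser_coeff (\<gamma> i j) (p i j))
      = (\<Prod>(i, j)\<in>?h ` index_pairs N. ser_coeff (\<gamma> i j) (p i j))"
  proof (rule prod.mono_neutral_right[OF finite_index_pairs])
    show "\<forall>x\<in>index_pairs (Suc N) - ?h ` index_pairs N. (case x of (i, j) \<Rightarrow> ser_coeff (\<gamma> i j) (p i j)) = 1"
    proof (clarify)
      fix i j assume ij: "(i, j) \<in> index_pairs (Suc N)" "(i, j) \<notin> ?h ` index_pairs N"
      have "i = 0"
      proof (rule ccontr)
        assume "i \<noteq> 0"
        then have "(i, j) = ?h (i - 1, j - 1)" and "(i - 1, j - 1) \<in> index_pairs N"
          using ij by (auto simp: index_pairs_def)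
        then show False
          using ij by blast
      qed
      then show "ser_coeff (\<gamma> i j) (p i j) = 1"
        using assms by simp
    qed
  qed (auto simp: index_pairs_def)
  moreover have "(\<Prod>(i, j)\<in>?h ` index_pairs N. ser_coeff (\<gamma> i j) (p i j))
      = (\<Prod>(i, j)\<in>index_pairs N. ser_coeff (\<gamma> (Suc i) (Suc j)) (p (Suc i) (Suc j)))"
    by (subst prod.reindex) (auto simp: inj_on_def case_prod_unfold)
  ultimately show ?thesis
    unfolding ct_weight_def by simp
qed

lemma ct_tuples_first_zero:
  assumes "\<alpha> 0 = 0" and "(m, p) \<in> ct_tuples (Suc N) \<alpha> \<gamma>"
  shows "m 0 = 0" and "p 0 j = 0"
proof -
  have "int (m 0) + (\<Sum>j\<in>{0<..<Suc N}. int (p 0 j)) = 0"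
    using assms unfolding ct_tuples_def ct_exp_def by auto
  moreover have "0 \<le> (\<Sum>j\<in>{0<..<Suc N}. int (p 0 j))"
    by (rule sum_nonneg) auto
  ultimately have "m 0 = 0" and inner: "\<forall>j\<in>{0<..<Suc N}. int (p 0 j) = 0"
    using sum_nonneg_eq_0_iff[of "{0<..<Suc N}" "\<lambda>j. int (p 0 j)"] by auto
  then show "m 0 = 0"
    by simp
  have "\<forall>j. \<not> (0 < j \<and> j < Suc N) \<longrightarrow> p 0 j = 0"
    using assms unfolding ct_tuples_def by auto
  then show "p 0 j = 0"
    using inner by (cases "0 < j \<and> j < Suc N") auto
qed

text \<open>For \<open>\<alpha> 0 = 0\<close> only the constant term in \<open>x\<^sub>0\<close> contributes, so \<open>x\<^sub>0\<close> may be set to \<open>0\<close>;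
  this turns each factor \<open>(x\<^sub>j - x\<^sub>0)\<^bsup>-\<gamma> 0 j\<^esup>\<close> into \<open>x\<^sub>j\<^bsup>-\<gamma> 0 j\<^esup>\<close>.\<close>

lemma ct_drop_first:
  assumes "\<alpha> 0 = 0"
  shows "ct (Suc N) \<alpha> \<beta> \<gamma>
       = ct N (\<lambda>i. \<alpha> (Suc i) - int (\<gamma> 0 (Suc i))) (\<lambda>i. \<beta> (Suc i)) (\<lambda>i j. \<gamma> (Suc i) (Suc j))"
proof -
  let ?\<alpha> = "\<lambda>i. \<alpha> (Suc i) - int (\<gamma> 0 (Suc i))"
  let ?\<gamma> = "\<lambda>i j. \<gamma> (Suc i) (Suc j)"
  let ?drop = "\<lambda>(m :: nat \<Rightarrow> nat, p :: nat \<Rightarrow> nat \<Rightarrow> nat). (\<lambda>i. m (Suc i), \<lambda>i j. p (Suc i) (Suc j))"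
  let ?lift = "\<lambda>(m :: nat \<Rightarrow> nat, p :: nat \<Rightarrow> nat \<Rightarrow> nat). (case_nat 0 m, case_nat (\<lambda>_. 0) (\<lambda>i. case_nat 0 (p i)))"
  show ?thesis
    unfolding ct_def
  proof (rule sum.reindex_bij_witness[where i = ?lift and j = ?drop])
    fix t assume t: "t \<in> ct_tuples (Suc N) \<alpha> \<gamma>"
    obtain m p where tp: "t = (m, p)"
      by (cases t)
    have z: "m 0 = 0" "\<forall>j. p 0 j = 0"
      using ct_tuples_first_zero[where \<alpha> = \<alpha>, OF assms] t tp by auto
    have p0: "\<forall>i. p i 0 = 0"
      using t tp unfolding ct_tuples_def by auto
    show "?lift (?drop t) = t"
      using tp z p0 by (auto simp: fun_eq_iff split: nat.split)
    have "\<forall>i<N. ct_exp N ?\<alpha> ?\<gamma> (\<lambda>i. m (Suc i)) (\<lambda>i j. p (Suc i) (Suc j)) i = 0"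
      using t tp ct_exp_drop_first[where m = m and p = p, OF z, symmetric] unfolding ct_tuples_def by auto
    then show "?drop t \<in> ct_tuples N ?\<alpha> ?\<gamma>"
      using t tp unfolding ct_tuples_def by auto
    show "(case ?drop t of (m, p) \<Rightarrow> ct_weight N (\<lambda>i. \<beta> (Suc i)) ?\<gamma> m p) = (case t of (m, p) \<Rightarrow> ct_weight (Suc N) \<beta> \<gamma> m p)"
      using tp ct_weight_drop_first[where m = m and p = p and N = N, OF z] by simp
  next
    fix s assume s: "s \<in> ct_tuples N ?\<alpha> ?\<gamma>"
    obtain m p where sp: "s = (m, p)"
      by (cases s)
    show "?drop (?lift s) = s"
      using sp by auto
    define M where "M = case_nat 0 m"
    define P where "P = case_nat (\<lambda>_. 0) (\<lambda>i. case_nat 0 (p i))"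
    have lift: "?lift s = (M, P)" and z: "M 0 = 0" "\<forall>j. P 0 j = 0"
      and drop: "(\<lambda>i. M (Suc i)) = m" "(\<lambda>i j. P (Suc i) (Suc j)) = p"
      using sp by (auto simp: M_def P_def)
    have "ct_exp (Suc N) \<alpha> \<gamma> M P i = 0" if "i < Suc N" for i
    proof (cases i)
      case 0
      then show ?thesis
        using assms z unfolding ct_exp_def by simp
    next
      case (Suc i')
      then show ?thesis
        using ct_exp_drop_first[where m = M and p = P and N = N and \<alpha> = \<alpha> and \<gamma> = \<gamma> and i = i', OF z] s sp that unfolding drop ct_tuples_def by auto
    qed
    moreover have "\<forall>i. Suc N \<le> i \<longrightarrow> M i = 0"
      using s sp unfolding ct_tuples_def M_def by (auto split: nat.split)
    moreover have "\<forall>i j. \<not> (i < j \<and> j < Suc N) \<longrightarrow> P i j = 0"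
      using s sp unfolding ct_tuples_def P_def by (auto split: nat.split)
    ultimately show "?lift s \<in> ct_tuples (Suc N) \<alpha> \<gamma>"
      unfolding lift ct_tuples_def by auto
  qed
qed

lemma Psi_Suc_N_N_1: "Psi (Suc N) N 1 b c = Psi N 0 c (b + 1) c"
proof -
  let ?S0 = "{..<Suc N} - {0}"
  have S0: "?S0 \<in> ksubsets (Suc N) N"
    unfolding ksubsets_def by auto
  have "psi_term (Suc N) 1 b c S = 0" if S: "S \<in> ksubsets (Suc N) N - {?S0}" for S
  proof -
    have "0 \<in> S"
    proof (rule ccontr)
      assume "0 \<notin> S"
      then have "S = ?S0"
        using S unfolding ksubsets_def by (intro card_subset_eq) auto
      then show False
        using S by auto
    qed
    then show ?thesis
      unfolding psi_term_def by (intro ct_eq_0_if_exp_0_pos) (auto simp: psi_alpha_def)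
  qed
  then have "Psi (Suc N) N 1 b c = psi_term (Suc N) 1 b c ?S0"
    unfolding Psi_eq_sum_psi_term using S0 by (simp add: sum.remove)
  also have "\<dots> = ct N (\<lambda>i. psi_alpha 1 ?S0 (Suc i) - int c) (\<lambda>i. psi_beta b ?S0 (Suc i)) (\<lambda>_ _. c)"
    unfolding psi_term_def by (subst ct_drop_first) (auto simp: psi_alpha_def)
  also have "\<dots> = psi_term N c (b + 1) c {}"
    unfolding psi_term_def by (rule ct_cong) (auto simp: psi_alpha_def psi_beta_def)
  finally show ?thesis
    by (simp add: Psi_eq_sum_psi_term)
qed

theorem lemma5p10:
  fixes a b c n k :: nat
  assumes "1 \<le> a" and "1 \<le> b" and "1 \<le> n" and "k \<le> n"
  shows "Psi n n a b c = Psi n 0 (a - 1) (b + 1) c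
       \<and> Psi n (n - 1) 1 b c = Psi (n - 1) 0 c (b + 1) c
       \<and> Psi n 0 1 b 0 = 1
       \<and> (1 \<le> k \<longrightarrow>
           real k * (real b + (real k - 1) * real c / 2) * Psi n k a b c
         = (real n - real k + 1) * (real a - 1 + (real n - real k) * real c / 2) * Psi n (k - 1) a b c)"
proof (intro conjI impI)
  show "Psi n n a b c = Psi n 0 (a - 1) (b + 1) c"
    using assms(1) by (rule Psi_n_eq_Psi_0)
  obtain N where N: "n = Suc N"
    using assms(3) by (cases n) auto
  show "Psi n (n - 1) 1 b c = Psi (n - 1) 0 c (b + 1) c"
    unfolding N using Psi_Suc_N_N_1 by simp
  show "Psi n 0 1 b 0 = 1"
    by (rule Psi_0_1_b_0)
  assume "1 \<le> k"
  then obtain k' where k: "k = Suc k'"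
    by (cases k) auto
  then show "real k * (real b + (real k - 1) * real c / 2) * Psi n k a b c
         = (real n - real k + 1) * (real a - 1 + (real n - real k) * real c / 2) * Psi n (k - 1) a b c"
    using Psi_contiguity[of k' n b c a] assms(4) by (simp add: algebra_simps)
qed

end
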